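(* Let $\beta$ be a formula, $f$ a unary mutable function, $M,M'$ frame models and $H,H'$ sets of locations such that $(M,H)$ transitions on $\mathsf{free}(x)$ to $(M',H')$, $M'\models\beta$ and $H'=[\![\mathit{Sp}(\beta)]\!]_{M'}$. Then $M\models\beta\wedge x\notin\mathit{Sp}(\beta)\wedge f(x)=f(x)$ and $H=[\![\mathit{Sp}(\beta\wedge x\notin\mathit{Sp}(\beta)\wedge f(x)=f(x))]\!]_M$.
   Context: Frame logic (FL) is first-order logic with least-fixpoint recursive definitions over a foreground sort of locations (fields are mutable unary functions) and background sorts including sets of locations, extended with support terms $\mathit{Sp}(\cdot)$ and guarded constructs $\mathit{ite}(\gamma:\alpha,\beta)$ and $\exists y:\gamma.\alpha$. Supports: constants/variables $\emptyset$; $\mathit{Sp}(f(t))=\{t\}\cup\mathit{Sp}(t)$ for mutable $f$, $\mathit{Sp}(t)$ otherwise; atoms and $\wedge$: union; $\mathit{Sp}(\neg\alpha)=\mathit{Sp}(\alpha)$; $\mathit{Sp}(\mathit{ite}(\gamma:\alpha,\beta))=\mathit{Sp}(\gamma)\cup$ support of the branch selected by $\gamma$; $\mathit{Sp}(\exists y:\gamma.\alpha)$ = union of $\mathit{Sp}(\gamma)$ over all $y$ and of $\mathit{Sp}(\alpha)$ over $y$ satisfying $\gamma$; inductive atoms get the support of the unfolded body plus supports of arguments. Frame models interpret supports and inductive relations by least solutions. Semantics: a configuration is $(M,H)$ with $M$ a frame model interpreting store and heap and $H$ the allocated locations; if $M(x)\in H$ then $(M,H)$ transitions on $\mathsf{free}(x)$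 to $(M,H\setminus\{M(x)\})$, otherwise to the abort configuration $\bot$. Formulas have no atomic relations on locations, functions of arity at most one, no functions from background sorts to locations, and quantifier guards of the form $f(z')=z$ or $z\in U$. *)

theory Defs
  imports Main
begin

type_synonym vname = string
type_synonym fname = string
type_synonym rname = string

datatype lfun = Mut fname | Imm fname

datatype sfun = SMut fname | SImm fname | SRec rname

datatype lterm =
    LVar vname
  | LApp lfun lterm

datatype sterm =
    SVar vname
  | SEmp
  | SSing lterm
  | SUn sterm sterm
  | SInt sterm sterm
  | SDiff sterm sterm
  | SApp sfun lterm
  | SIte fm sterm sterm
  | Supp fm
and fm =
    FTrue
  | LEq lterm lterm
  | SEq sterm sterm
  | Mem lterm sterm
  | Sub sterm sterm
  | Neg fm
  | Conj fm fm
  | Ite fm fm fm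
  | Ex vname guard fm
  | RApp rname lterm
and guard =
    GFn lfun vname vname
  | GMem vname sterm

record 'l model =
  sl    :: "vname \<Rightarrow> 'l"
  ss    :: "vname \<Rightarrow> 'l set"
  mfl   :: "fname \<Rightarrow> 'l \<Rightarrow> 'l"
  mfs   :: "fname \<Rightarrow> 'l \<Rightarrow> 'l set"
  ifl   :: "fname \<Rightarrow> 'l \<Rightarrow> 'l"
  ifs   :: "fname \<Rightarrow> 'l \<Rightarrow> 'l set"
  rrel  :: "rname \<Rightarrow> 'l \<Rightarrow> bool"
  rfun  :: "rname \<Rightarrow> 'l \<Rightarrow> 'l set"
  sprel :: "rname \<Rightarrow> 'l \<Rightarrow> 'l set"  \<comment> \<open>supports of recursive relations\<close>
  spfun :: "rname \<Rightarrow> 'l \<Rightarrow> 'l set"  \<comment> \<open>supports of recursive functions\<close>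

fun lfun_val :: "('l,'a) model_scheme \<Rightarrow> lfun \<Rightarrow> 'l \<Rightarrow> 'l" where
  "lfun_val M (Mut f) = mfl M f"
| "lfun_val M (Imm f) = ifl M f"

fun sfun_val :: "('l,'a) model_scheme \<Rightarrow> sfun \<Rightarrow> 'l \<Rightarrow> 'l set" where
  "sfun_val M (SMut f) = mfs M f"
| "sfun_val M (SImm f) = ifs M f"
| "sfun_val M (SRec r) = rfun M r"

primrec lval :: "('l,'a) model_scheme \<Rightarrow> lterm \<Rightarrow> 'l" where
  "lval M (LVar v) = sl M v"
| "lval M (LApp g t) = lfun_val M g (lval M t)"

primrec lsp :: "('l,'a) model_scheme \<Rightarrow> lterm \<Rightarrow> 'l set" where
  "lsp M (LVar v) = {}"
| "lsp M (LApp g t) = (case g of Mut f \<Rightarrow> {lval M t} \<union> lsp M t | Imm f \<Rightarrow> lsp M t)"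

fun sval :: "('l,'a) model_scheme \<Rightarrow> sterm \<Rightarrow> 'l set"
and holds :: "('l,'a) model_scheme \<Rightarrow> fm \<Rightarrow> bool"
and gholds :: "('l,'a) model_scheme \<Rightarrow> guard \<Rightarrow> bool"
and ssp :: "('l,'a) model_scheme \<Rightarrow> sterm \<Rightarrow> 'l set"
and fsp :: "('l,'a) model_scheme \<Rightarrow> fm \<Rightarrow> 'l set"
and gsp :: "('l,'a) model_scheme \<Rightarrow> guard \<Rightarrow> 'l set"
where
  "sval M (SVar v) = ss M v"
| "sval M SEmp = {}"
| "sval M (SSing t) = {lval M t}"
| "sval M (SUn a b) = sval M a \<union> sval M b"
| "sval M (SInt a b) = sval M a \<inter> sval M b"
| "sval M (SDiff a b) = sval M a - sval M b"
| "sval M (SApp g t) = sfun_val M g (lval M t)"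
| "sval M (SIte c a b) = (if holds M c then sval M a else sval M b)"
| "sval M (Supp \<alpha>) = fsp M \<alpha>"
| "holds M FTrue = True"
| "holds M (LEq s t) = (lval M s = lval M t)"
| "holds M (SEq a b) = (sval M a = sval M b)"
| "holds M (Mem t a) = (lval M t \<in> sval M a)"
| "holds M (Sub a b) = (sval M a \<subseteq> sval M b)"
| "holds M (Neg \<alpha>) = (\<not> holds M \<alpha>)"
| "holds M (Conj \<alpha> \<beta>) = (holds M \<alpha> \<and> holds M \<beta>)"
| "holds M (Ite c \<alpha> \<beta>) = (if holds M c then holds M \<alpha> else holds M \<beta>)"
| "holds M (Ex y c \<alpha>) = (\<exists>v. gholds (M\<lparr>sl := (sl M)(y := v)\<rparr>) c
                              \<and> holds (M\<lparr>sl := (sl M)(y := v)\<rparr>) \<alpha>)"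
| "holds M (RApp r t) = rrel M r (lval M t)"
| "gholds M (GFn g z' z) = (lfun_val M g (sl M z') = sl M z)"
| "gholds M (GMem z a) = (sl M z \<in> sval M a)"
| "ssp M (SVar v) = {}"
| "ssp M SEmp = {}"
| "ssp M (SSing t) = lsp M t"
| "ssp M (SUn a b) = ssp M a \<union> ssp M b"
| "ssp M (SInt a b) = ssp M a \<union> ssp M b"
| "ssp M (SDiff a b) = ssp M a \<union> ssp M b"
| "ssp M (SApp g t) = (case g of SMut f \<Rightarrow> {lval M t} \<union> lsp M t
                               | SImm f \<Rightarrow> lsp M t
                               | SRec r \<Rightarrow> spfun M r (lval M t) \<union> lsp M t)"
| "ssp M (SIte c a b) = fsp M c \<union> (if holds M c then ssp M a else ssp M b)"
| "ssp M (Supp \<alpha>) = fsp M \<alpha>"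
| "fsp M FTrue = {}"
| "fsp M (LEq s t) = lsp M s \<union> lsp M t"
| "fsp M (SEq a b) = ssp M a \<union> ssp M b"
| "fsp M (Mem t a) = lsp M t \<union> ssp M a"
| "fsp M (Sub a b) = ssp M a \<union> ssp M b"
| "fsp M (Neg \<alpha>) = fsp M \<alpha>"
| "fsp M (Conj \<alpha> \<beta>) = fsp M \<alpha> \<union> fsp M \<beta>"
| "fsp M (Ite c \<alpha> \<beta>) = fsp M c \<union> (if holds M c then fsp M \<alpha> else fsp M \<beta>)"
| "fsp M (Ex y c \<alpha>) =
     (\<Union>v. gsp (M\<lparr>sl := (sl M)(y := v)\<rparr>) c)
     \<union> (\<Union>v \<in> {v. gholds (M\<lparr>sl := (sl M)(y := v)\<rparr>) c}. fsp (M\<lparr>sl := (sl M)(y := v)\<rparr>) \<alpha>)"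
| "fsp M (RApp r t) = sprel M r (lval M t) \<union> lsp M t"
| "gsp M (GFn g z' z) = (case g of Mut f \<Rightarrow> {sl M z'} | Imm f \<Rightarrow> {})"
| "gsp M (GMem z a) = ssp M a"

text \<open>A system of recursive definitions: each recursive relation r is defined by
  r(p) := body, each recursive function by F(p) := body (p the formal parameter).\<close>
record rdefs =
  drel :: "rname \<Rightarrow> vname \<times> fm"
  dfun :: "rname \<Rightarrow> vname \<times> sterm"

definition at_param :: "('l,'a) model_scheme \<Rightarrow> vname \<Rightarrow> 'l \<Rightarrow> ('l,'a) model_scheme" where
  "at_param M p v = M\<lparr>sl := (sl M)(p := v)\<rparr>"

definition is_solution ::
  "rdefs \<Rightarrow> 'l model \<Rightarrow> (rname \<Rightarrow> 'l \<Rightarrow> bool) \<Rightarrow> (rname \<Rightarrow> 'l \<Rightarrow> 'l set)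
     \<Rightarrow> (rname \<Rightarrow> 'l \<Rightarrow> 'l set) \<Rightarrow> (rname \<Rightarrow> 'l \<Rightarrow> 'l set) \<Rightarrow> bool" where
  "is_solution D M R F SR SF \<longleftrightarrow>
     (let M0 = M\<lparr>rrel := R, rfun := F, sprel := SR, spfun := SF\<rparr> in
       (\<forall>r v. R r v = holds (at_param M0 (fst (drel D r)) v) (snd (drel D r))) \<and>
       (\<forall>r v. F r v = sval (at_param M0 (fst (dfun D r)) v) (snd (dfun D r))) \<and>
       (\<forall>r v. SR r v = fsp (at_param M0 (fst (drel D r)) v) (snd (drel D r))) \<and>
       (\<forall>r v. SF r v = ssp (at_param M0 (fst (dfun D r)) v) (snd (dfun D r))))"

definition frame_model :: "rdefs \<Rightarrow> 'l model \<Rightarrow> bool" where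
  "frame_model D M \<longleftrightarrow>
     is_solution D M (rrel M) (rfun M) (sprel M) (spfun M) \<and>
     (\<forall>R F SR SF. is_solution D M R F SR SF \<longrightarrow>
        rrel M \<le> R \<and> rfun M \<le> F \<and> sprel M \<le> SR \<and> spfun M \<le> SF)"

datatype 'l config = Conf "'l model" "'l set" | Abort

inductive step_free :: "vname \<Rightarrow> 'l config \<Rightarrow> 'l config \<Rightarrow> bool" where
  free_ok:    "sl M x \<in> H \<Longrightarrow> step_free x (Conf M H) (Conf M (H - {sl M x}))"
| free_abort: "sl M x \<notin> H \<Longrightarrow> step_free x (Conf M H) Abort"

end

theory Submission
  imports Defs
begin

text \<open>Freeing x leaves the model unchanged and only removes the location of x from the heap.
  Hence \<beta> still holds before the step, the location of x lies outside Sp(\<beta>) = H - {x},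
  and adding the footprint {x} of f(x) to the support restores exactly H.\<close>

lemma step_free_Conf_iff:
  "step_free x (Conf M H) (Conf M' H') \<longleftrightarrow> M' = M \<and> sl M x \<in> H \<and> H' = H - {sl M x}"
  by (auto elim: step_free.cases intro: step_free.intros)

lemma fsp_Conj_not_in_Supp_field_eq:
  "fsp M (Conj \<beta> (Conj (Neg (Mem (LVar x) (Supp \<beta>)))
                     (LEq (LApp (Mut f) (LVar x)) (LApp (Mut f) (LVar x)))))
     = insert (sl M x) (fsp M \<beta>)"
  by auto

theorem theorem13:
  fixes D :: rdefs and \<beta> :: fm and f :: fname and x :: vname
    and M M' :: "'l model" and H H' :: "'l set"
  assumes "frame_model D M" and "frame_model D M'"
    and "step_free x (Conf M H) (Conf M' H')"
    and "holds M' \<beta>"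
    and "H' = fsp M' \<beta>"
  shows "holds M (Conj \<beta> (Conj (Neg (Mem (LVar x) (Supp \<beta>)))
                 (LEq (LApp (Mut f) (LVar x)) (LApp (Mut f) (LVar x)))))
       \<and> H = fsp M (Conj \<beta> (Conj (Neg (Mem (LVar x) (Supp \<beta>)))
                 (LEq (LApp (Mut f) (LVar x)) (LApp (Mut f) (LVar x)))))"
proof -
  from assms(3) have "M' = M" and x_alloc: "sl M x \<in> H" and "H' = H - {sl M x}"
    by (simp_all add: step_free_Conf_iff)
  with assms(4,5) have \<beta>: "holds M \<beta>" and supp: "fsp M \<beta> = H - {sl M x}"
    by simp_all
  from \<beta> supp show ?thesis
    unfolding fsp_Conj_not_in_Supp_field_eq using x_alloc by auto
qed

end
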